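(* In $\mathcal{K}(m)$ (for $m$ large enough that all indices occur) the following equations hold: \begin{align*} 9z(3,\{1,2,3\})&=z(2,\{1,2\})z(2,\{3\})-z(2,\{1,3\})z(2,\{2\})+z(2,\{2,3\})z(2,\{1\})\\ &\quad+z(1,\{1,2\})z(3,\{3\})-z(1,\{1,3\})z(3,\{2\})+z(1,\{2,3\})z(3,\{1\}),\\ 9z(5,\{1,2,3\})&=z(4,\{1,2\})z(2,\{3\})-z(4,\{1,3\})z(2,\{2\})+z(4,\{2,3\})z(2,\{1\})\\ &\quad+z(3,\{1,2\})z(3,\{3\})-z(3,\{1,3\})z(3,\{2\})+z(3,\{2,3\})z(3,\{1\}),\\ 3z(4,\{1,2\})&=z(3,\{1\})z(2,\{2\})+z(2,\{1\})z(3,\{2\}),\\ 3z(6,\{1,2\})&=z(5,\{1\})z(2,\{2\})+z(4,\{1\})z(3,\{2\}),\\ z(6,\emptyset)&=0. \end{align*}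
   Context: $\mathcal{K}(m)=\mathbb{Q}[x,y,w]/(x+y+w,x^2+y^2+w^2,x^6+y^6+w^6)\otimes\bigotimes_{j=1}^m\Lambda(\alpha_j,\beta_j,\gamma_j)/(\alpha_j+\beta_j+\gamma_j)$, a graded-commutative algebra with $|x|=|y|=|w|=2$ and $|\alpha_j|=|\beta_j|=|\gamma_j|=1$. For $I=\{i_1<\dots<i_k\}\subset\{1,\dots,m\}$, $\alpha_I=\alpha_{i_1}\cdots\alpha_{i_k}$ ($\alpha_\emptyset=1$), similarly $\beta_I,\gamma_I$; for $d\ge0$, $z(d+1,I)=x^d\alpha_I+y^d\beta_I+w^d\gamma_I$. *)

theory Defs
  imports Complex_Main
begin

text \<open>
  The free graded-commutative Q-algebra on even generators x, y, w (degree 2) and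
  odd generators (degree 1) indexed by natural numbers: the odd generator with
  index 3*j is alpha_j, 3*j+1 is beta_j, 3*j+2 is gamma_j.
  A basis monomial is a pair (exponents of x,y,w ; finite set S of odd generators),
  standing for x^a y^b w^c times the product of the elements of S in increasing order.
  An element is a finitely supported function from basis monomials to rat.
\<close>

type_synonym kmon = "(nat \<times> nat \<times> nat) \<times> nat set"
type_synonym kel = "kmon \<Rightarrow> rat"

definition kmonmul :: "kmon \<Rightarrow> kmon \<Rightarrow> kmon" where
  "kmonmul a b = (case a of ((a1, a2, a3), S) \<Rightarrow> case b of ((b1, b2, b3), T) \<Rightarrow>
      ((a1 + b1, a2 + b2, a3 + b3), S \<union> T))"

text \<open>Koszul sign of multiplying two basis monomials (0 if an odd generator repeats).\<close>
definition ksign :: "kmon \<Rightarrow> kmon \<Rightarrow> rat" where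
  "ksign a b = (if snd a \<inter> snd b \<noteq> {} then 0
     else (-1) ^ card {(s, t). s \<in> snd a \<and> t \<in> snd b \<and> t < s})"

definition kzero :: kel where "kzero = (\<lambda>_. 0)"
definition kadd :: "kel \<Rightarrow> kel \<Rightarrow> kel" where "kadd f g = (\<lambda>c. f c + g c)"
definition ksmult :: "rat \<Rightarrow> kel \<Rightarrow> kel" where "ksmult r f = (\<lambda>c. r * f c)"
definition ksub :: "kel \<Rightarrow> kel \<Rightarrow> kel" where "ksub f g = (\<lambda>c. f c - g c)"

definition kmult :: "kel \<Rightarrow> kel \<Rightarrow> kel" where
  "kmult f g = (\<lambda>c. \<Sum>(a, b) \<in> {(a, b). f a \<noteq> 0 \<and> g b \<noteq> 0}.
       if kmonmul a b = c then ksign a b * f a * g b else 0)"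

definition kmono :: "kmon \<Rightarrow> kel" where "kmono u = (\<lambda>c. if c = u then 1 else 0)"

definition kone :: kel where "kone = kmono ((0, 0, 0), {})"

primrec kpow :: "kel \<Rightarrow> nat \<Rightarrow> kel" where
  "kpow f 0 = kone"
| "kpow f (Suc n) = kmult f (kpow f n)"

primrec kprod_list :: "kel list \<Rightarrow> kel" where
  "kprod_list [] = kone"
| "kprod_list (f # fs) = kmult f (kprod_list fs)"

definition kx :: kel where "kx = kmono ((1, 0, 0), {})"
definition ky :: kel where "ky = kmono ((0, 1, 0), {})"
definition kw :: kel where "kw = kmono ((0, 0, 1), {})"

definition kal :: "nat \<Rightarrow> kel" where "kal j = kmono ((0, 0, 0), {3 * j})"
definition kbe :: "nat \<Rightarrow> kel" where "kbe j = kmono ((0, 0, 0), {3 * j + 1})"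
definition kga :: "nat \<Rightarrow> kel" where "kga j = kmono ((0, 0, 0), {3 * j + 2})"

definition kalI :: "nat set \<Rightarrow> kel" where "kalI I = kprod_list (map kal (sorted_list_of_set I))"
definition kbeI :: "nat set \<Rightarrow> kel" where "kbeI I = kprod_list (map kbe (sorted_list_of_set I))"
definition kgaI :: "nat set \<Rightarrow> kel" where "kgaI I = kprod_list (map kga (sorted_list_of_set I))"

text \<open>z(n, I) = x^(n-1) alpha_I + y^(n-1) beta_I + w^(n-1) gamma_I  (used for n \<ge> 1).\<close>
definition kz :: "nat \<Rightarrow> nat set \<Rightarrow> kel" where
  "kz n I = kadd (kadd (kmult (kpow kx (n - 1)) (kalI I)) (kmult (kpow ky (n - 1)) (kbeI I)))
                 (kmult (kpow kw (n - 1)) (kgaI I))"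

text \<open>Defining relations of K(m); the odd generators with index outside {1..m} are killed,
  so that the quotient is exactly K(m).\<close>
definition krels :: "nat \<Rightarrow> kel set" where
  "krels m =
     {kadd (kadd kx ky) kw,
      kadd (kadd (kpow kx 2) (kpow ky 2)) (kpow kw 2),
      kadd (kadd (kpow kx 6) (kpow ky 6)) (kpow kw 6)}
   \<union> {kadd (kadd (kal j) (kbe j)) (kga j) | j. j \<in> {1..m}}
   \<union> {kal j | j. j \<notin> {1..m}} \<union> {kbe j | j. j \<notin> {1..m}} \<union> {kga j | j. j \<notin> {1..m}}"

inductive_set kideal :: "nat \<Rightarrow> kel set" for m :: nat where
  gen: "r \<in> krels m \<Longrightarrow> r \<in> kideal m"
| zero: "kzero \<in> kideal m"
| add: "a \<in> kideal m \<Longrightarrow> b \<in> kideal m \<Longrightarrow> kadd a b \<in> kideal m"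
| smult: "a \<in> kideal m \<Longrightarrow> ksmult c a \<in> kideal m"
| lmult: "a \<in> kideal m \<Longrightarrow> kmult (kmono u) a \<in> kideal m"
| rmult: "a \<in> kideal m \<Longrightarrow> kmult a (kmono u) \<in> kideal m"

definition keq :: "nat \<Rightarrow> kel \<Rightarrow> kel \<Rightarrow> bool" where
  "keq m a b \<longleftrightarrow> ksub a b \<in> kideal m"

end

theory Submission
  imports Defs "HOL-Library.List_Lexorder" "HOL-Library.Product_Lexorder"
begin

text \<open>The relations \<open>x + y + w = 0\<close> and \<open>x\<^sup>2 + y\<^sup>2 + w\<^sup>2 = 0\<close> kill the first two elementary
  symmetric functions of \<open>x, y, w\<close>, and together with \<open>\<alpha>\<^sub>j + \<beta>\<^sub>j + \<gamma>\<^sub>j = 0\<close> they already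
  imply all five identities. Each identity is proved by an
  explicit ideal certificate: a list of triples \<open>(c, u, r)\<close>, with \<open>c\<close> rational, \<open>u\<close> a basis
  monomial and \<open>r\<close> one of these relations, such that the difference of the two sides equals
  \<open>\<Sum> c \<cdot> u \<cdot> r\<close>.\<close>

section \<open>Sparse representation of the free algebra\<close>

type_synonym kmon_code = "(nat \<times> nat \<times> nat) \<times> nat list"
type_synonym kel_code = "(rat \<times> kmon_code) list"

definition kmon_of_code :: "kmon_code \<Rightarrow> kmon" where
  "kmon_of_code k = (fst k, set (snd k))"

definition kel_of_code :: "kel_code \<Rightarrow> kel" where
  "kel_of_code P c = (\<Sum>(a, k)\<leftarrow>P. if kmon_of_code k = c then a else 0)"

lemma kel_of_code_Nil: "kel_of_code [] = kzero"
  by (simp add: kel_of_code_def kzero_def fun_eq_iff)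

lemma kel_of_code_Cons:
  "kel_of_code ((a, k) # P) c = (if kmon_of_code k = c then a else 0) + kel_of_code P c"
  by (simp add: kel_of_code_def)

lemma kel_of_code_append: "kel_of_code (P @ Q) = kadd (kel_of_code P) (kel_of_code Q)"
  by (simp add: kel_of_code_def kadd_def fun_eq_iff)

text \<open>Sorting makes codes of equal monomials syntactically equal, so that the normalisation
  below can cancel them; soundness does not depend on it.\<close>

definition kmonmul_code :: "kmon_code \<Rightarrow> kmon_code \<Rightarrow> kmon_code" where
  "kmonmul_code k l = (case (k, l) of (((a1, a2, a3), s), ((b1, b2, b3), t)) \<Rightarrow>
     ((a1 + b1, a2 + b2, a3 + b3), sort (s @ t)))"

definition ksign_code :: "kmon_code \<Rightarrow> kmon_code \<Rightarrow> rat" where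
  "ksign_code k l = (if list_ex (\<lambda>s. s \<in> set (snd l)) (snd k) then 0
     else (-1) ^ length [(s, t) \<leftarrow> List.product (remdups (snd k)) (remdups (snd l)). t < s])"

definition kmult_code :: "kel_code \<Rightarrow> kel_code \<Rightarrow> kel_code" where
  "kmult_code P Q = [(ksign_code k l * a * b, kmonmul_code k l). (a, k) \<leftarrow> P, (b, l) \<leftarrow> Q]"

lemma kmonmul_kmon_of_code:
  "kmonmul (kmon_of_code k) (kmon_of_code l) = kmon_of_code (kmonmul_code k l)"
  by (cases k; cases l) (auto simp: kmonmul_def kmon_of_code_def kmonmul_code_def)

lemma ksign_kmon_of_code: "ksign (kmon_of_code k) (kmon_of_code l) = ksign_code k l"
proof -
  let ?inversions = "[(s, t) \<leftarrow> List.product (remdups (snd k)) (remdups (snd l)). t < s]"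
  have "{(s, t). s \<in> set (snd k) \<and> t \<in> set (snd l) \<and> t < s} = set ?inversions"
    by auto
  moreover have "distinct ?inversions"
    by (simp add: distinct_product)
  ultimately have
    "card {(s, t). s \<in> set (snd k) \<and> t \<in> set (snd l) \<and> t < s} = length ?inversions"
    by (metis distinct_card)
  then show ?thesis
    by (auto simp: ksign_def ksign_code_def kmon_of_code_def list_ex_iff)
qed

lemma kel_of_code_nonzero: "kel_of_code P c \<noteq> 0 \<Longrightarrow> c \<in> kmon_of_code ` snd ` set P"
  by (induction P) (auto simp: kel_of_code_Nil kzero_def kel_of_code_Cons split: if_splits)

lemma sum_kel_of_code:
  assumes "finite S" "kmon_of_code ` snd ` set P \<subseteq> S"
  shows "(\<Sum>c\<in>S. kel_of_code P c * f c) = (\<Sum>(a, k)\<leftarrow>P. a * f (kmon_of_code k))"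
  using assms(2)
proof (induction P)
  case Nil
  then show ?case by (simp add: kel_of_code_Nil kzero_def)
next
  case (Cons ak P)
  obtain a k where ak: "ak = (a, k)"
    by (cases ak)
  have "(\<Sum>c\<in>S. kel_of_code (ak # P) c * f c)
      = (\<Sum>c\<in>S. if kmon_of_code k = c then a * f c else 0) + (\<Sum>c\<in>S. kel_of_code P c * f c)"
    by (simp add: ak kel_of_code_Cons distrib_right sum.distrib if_distrib[where f = "\<lambda>x. x * f _"]
        cong: if_cong)
  also have "\<dots> = a * f (kmon_of_code k) + (\<Sum>c\<in>S. kel_of_code P c * f c)"
    using Cons.prems assms(1) by (simp add: ak)
  finally show ?case
    using Cons by (simp add: ak)
qed

lemma kmult_kel_of_code: "kmult (kel_of_code P) (kel_of_code Q) = kel_of_code (kmult_code P Q)"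
proof
  fix c
  define SP where "SP = kmon_of_code ` snd ` set P"
  define SQ where "SQ = kmon_of_code ` snd ` set Q"
  define h where "h = (\<lambda>u v. if kmonmul u v = c then ksign u v else 0)"
  have sum_list_concat: "sum_list (concat xss) = sum_list (map sum_list xss)"
    for xss :: "rat list list"
    by (induction xss) auto
  have fin: "finite SP" "finite SQ"
    by (auto simp: SP_def SQ_def)
  have "kmult (kel_of_code P) (kel_of_code Q) c
      = (\<Sum>(u, v)\<in>{(u, v). kel_of_code P u \<noteq> 0 \<and> kel_of_code Q v \<noteq> 0}.
           h u v * kel_of_code P u * kel_of_code Q v)"
    unfolding kmult_def h_def by (rule sum.cong) auto
  also have "\<dots> = (\<Sum>(u, v)\<in>SP \<times> SQ. h u v * kel_of_code P u * kel_of_code Q v)"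
    by (rule sum.mono_neutral_left) (use fin kel_of_code_nonzero in \<open>auto simp: SP_def SQ_def\<close>)
  also have "\<dots> = (\<Sum>u\<in>SP. kel_of_code P u * (\<Sum>v\<in>SQ. kel_of_code Q v * h u v))"
    by (simp add: sum.cartesian_product[symmetric] sum_distrib_left mult_ac)
  also have "\<dots> = (\<Sum>(a, k)\<leftarrow>P. a * (\<Sum>(b, l)\<leftarrow>Q. b * h (kmon_of_code k) (kmon_of_code l)))"
    by (simp add: sum_kel_of_code fin SP_def SQ_def)
  also have "\<dots> = kel_of_code (kmult_code P Q) c"
    by (simp add: kel_of_code_def kmult_code_def h_def kmonmul_kmon_of_code ksign_kmon_of_code
        sum_list_concat map_concat o_def case_prod_unfold sum_list_const_mult[symmetric] mult_ac
        if_distrib cong: if_cong)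
  finally show "kmult (kel_of_code P) (kel_of_code Q) c = kel_of_code (kmult_code P Q) c" .
qed

definition ksmult_code :: "rat \<Rightarrow> kel_code \<Rightarrow> kel_code" where
  "ksmult_code r P = [(r * a, k). (a, k) \<leftarrow> P]"

lemma ksmult_kel_of_code: "ksmult r (kel_of_code P) = kel_of_code (ksmult_code r P)"
  by (induction P)
    (auto simp: fun_eq_iff ksmult_def kel_of_code_Nil kzero_def kel_of_code_Cons ksmult_code_def
      distrib_left)

lemma ksub_kel_of_code: "ksub (kel_of_code P) (kel_of_code Q) = kel_of_code (P @ ksmult_code (-1) Q)"
  by (simp add: kel_of_code_append ksmult_kel_of_code[symmetric]) (simp add: kadd_def ksub_def ksmult_def)

definition kmono_code :: "kmon_code \<Rightarrow> kel_code" where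
  "kmono_code k = [(1, k)]"

lemma kmono_kmon_of_code: "kmono (kmon_of_code k) = kel_of_code (kmono_code k)"
  by (auto simp: kmono_def kel_of_code_def kmono_code_def)

definition kone_code :: kel_code where
  "kone_code = kmono_code ((0, 0, 0), [])"

primrec kpow_code :: "kel_code \<Rightarrow> nat \<Rightarrow> kel_code" where
  "kpow_code P 0 = kone_code"
| "kpow_code P (Suc n) = kmult_code P (kpow_code P n)"

primrec kprod_list_code :: "kel_code list \<Rightarrow> kel_code" where
  "kprod_list_code [] = kone_code"
| "kprod_list_code (P # Ps) = kmult_code P (kprod_list_code Ps)"

lemma kone_kel_of_code: "kone = kel_of_code kone_code"
  by (simp add: kone_def kone_code_def kmono_kmon_of_code[symmetric] kmon_of_code_def)

lemma kpow_kel_of_code: "kpow (kel_of_code P) n = kel_of_code (kpow_code P n)"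
  by (induction n) (simp_all add: kone_kel_of_code kmult_kel_of_code)

lemma kprod_list_kel_of_code:
  "kprod_list (map (\<lambda>j. kel_of_code (f j)) l) = kel_of_code (kprod_list_code (map f l))"
  by (induction l) (simp_all add: kone_kel_of_code kmult_kel_of_code)

definition kx_code :: kel_code where
  "kx_code = kmono_code ((1, 0, 0), [])"
definition ky_code :: kel_code where
  "ky_code = kmono_code ((0, 1, 0), [])"
definition kw_code :: kel_code where
  "kw_code = kmono_code ((0, 0, 1), [])"
definition kal_code :: "nat \<Rightarrow> kel_code" where
  "kal_code j = kmono_code ((0, 0, 0), [3 * j])"
definition kbe_code :: "nat \<Rightarrow> kel_code" where
  "kbe_code j = kmono_code ((0, 0, 0), [3 * j + 1])"
definition kga_code :: "nat \<Rightarrow> kel_code" where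
  "kga_code j = kmono_code ((0, 0, 0), [3 * j + 2])"

lemma kx_kel_of_code: "kx = kel_of_code kx_code"
  and ky_kel_of_code: "ky = kel_of_code ky_code"
  and kw_kel_of_code: "kw = kel_of_code kw_code"
  and kal_kel_of_code: "kal = (\<lambda>j. kel_of_code (kal_code j))"
  and kbe_kel_of_code: "kbe = (\<lambda>j. kel_of_code (kbe_code j))"
  and kga_kel_of_code: "kga = (\<lambda>j. kel_of_code (kga_code j))"
  by (simp_all add: fun_eq_iff kx_def ky_def kw_def kal_def kbe_def kga_def kx_code_def ky_code_def
      kw_code_def kal_code_def kbe_code_def kga_code_def kmono_kmon_of_code[symmetric] kmon_of_code_def)

definition kz_code :: "nat \<Rightarrow> nat list \<Rightarrow> kel_code" where
  "kz_code n l =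
     (kmult_code (kpow_code kx_code (n - 1)) (kprod_list_code (map kal_code (sort (remdups l))))
      @ kmult_code (kpow_code ky_code (n - 1)) (kprod_list_code (map kbe_code (sort (remdups l)))))
     @ kmult_code (kpow_code kw_code (n - 1)) (kprod_list_code (map kga_code (sort (remdups l))))"

lemma kz_kel_of_code: "kz n (set l) = kel_of_code (kz_code n l)"
  unfolding kz_def kz_code_def kalI_def kbeI_def kgaI_def sorted_list_of_set_sort_remdups
  by (simp only: kx_kel_of_code ky_kel_of_code kw_kel_of_code kal_kel_of_code kbe_kel_of_code
      kga_kel_of_code kpow_kel_of_code kprod_list_kel_of_code kmult_kel_of_code kel_of_code_append)

lemmas kel_of_code_reflect =
  list.set[symmetric] kz_kel_of_code kel_of_code_Nil[symmetric]
  ksmult_kel_of_code kmult_kel_of_code ksub_kel_of_code kel_of_code_append[symmetric]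

section \<open>Ideal certificates\<close>

datatype krel = Rel_p1 | Rel_p2 | Rel_odd nat

fun krel_code :: "krel \<Rightarrow> kel_code" where
  "krel_code Rel_p1 = (kx_code @ ky_code) @ kw_code"
| "krel_code Rel_p2 = (kpow_code kx_code 2 @ kpow_code ky_code 2) @ kpow_code kw_code 2"
| "krel_code (Rel_odd j) = (kal_code j @ kbe_code j) @ kga_code j"

fun krel_in_range :: "nat \<Rightarrow> krel \<Rightarrow> bool" where
  "krel_in_range m (Rel_odd j) \<longleftrightarrow> j \<in> {1..m}"
| "krel_in_range m _ \<longleftrightarrow> True"

lemma krel_code_in_krels: "krel_in_range m r \<Longrightarrow> kel_of_code (krel_code r) \<in> krels m"
  by (cases r) (auto simp: krels_def kel_of_code_append kpow_kel_of_code
      kx_kel_of_code ky_kel_of_code kw_kel_of_code kal_kel_of_code kbe_kel_of_code kga_kel_of_code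
      simp del: append_assoc)

definition kcert_code :: "(rat \<times> kmon_code \<times> krel) list \<Rightarrow> kel_code" where
  "kcert_code C = concat [ksmult_code c (kmult_code (kmono_code k) (krel_code r)). (c, k, r) \<leftarrow> C]"

lemma kcert_code_in_kideal:
  "\<forall>(_, _, r) \<in> set C. krel_in_range m r \<Longrightarrow> kel_of_code (kcert_code C) \<in> kideal m"
proof (induction C)
  case Nil
  then show ?case
    by (simp add: kcert_code_def kel_of_code_Nil kideal.zero)
next
  case (Cons ckr C)
  obtain c k r where ckr: "ckr = (c, k, r)"
    by (cases ckr)
  have "kel_of_code (ksmult_code c (kmult_code (kmono_code k) (krel_code r)))
      = ksmult c (kmult (kmono (kmon_of_code k)) (kel_of_code (krel_code r)))"
    by (simp add: kmono_kmon_of_code kmult_kel_of_code ksmult_kel_of_code)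
  also have "\<dots> \<in> kideal m"
    using Cons.prems ckr
    by (intro kideal.smult kideal.lmult kideal.gen[OF krel_code_in_krels]) auto
  finally show ?case
    using Cons by (simp add: kcert_code_def ckr kel_of_code_append kideal.add)
qed

text \<open>Any order on codes is sound here; the lexicographic one makes equal codes meet, so that
  their coefficients get added.\<close>

fun kmerge_code :: "kel_code \<Rightarrow> kel_code \<Rightarrow> kel_code" where
  "kmerge_code [] Q = Q"
| "kmerge_code P [] = P"
| "kmerge_code ((a, k) # P) ((b, l) # Q) =
     (if k = l then (a + b, k) # kmerge_code P Q
      else if k < l then (a, k) # kmerge_code P ((b, l) # Q)
      else (b, l) # kmerge_code ((a, k) # P) Q)"

lemma kel_of_code_kmerge_code: "kel_of_code (kmerge_code P Q) = kel_of_code (P @ Q)"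
  by (induction P Q rule: kmerge_code.induct)
    (auto simp: fun_eq_iff kel_of_code_Cons kel_of_code_append kadd_def)

function knormalize_code :: "kel_code \<Rightarrow> kel_code" where
  "knormalize_code [] = []"
| "knormalize_code [t] = [t]"
| "knormalize_code (s # t # P) =
     kmerge_code (knormalize_code (take (length P div 2 + 1) (s # t # P)))
       (knormalize_code (drop (length P div 2 + 1) (s # t # P)))"
  by pat_completeness auto
termination
  by (relation "measure length") auto

lemma kel_of_code_knormalize_code: "kel_of_code (knormalize_code P) = kel_of_code P"
proof (induction P rule: knormalize_code.induct)
  case (3 s t P)
  let ?n = "length P div 2 + 1"
  have "kel_of_code (knormalize_code (s # t # P))
      = kel_of_code (take ?n (s # t # P) @ drop ?n (s # t # P))"
    using 3 by (simp only: knormalize_code.simps kel_of_code_kmerge_code kel_of_code_append)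
  then show ?case
    by (simp only: append_take_drop_id)
qed simp_all

lemma kel_of_code_zero_coeffs: "list_all (\<lambda>(a, _). a = 0) P \<Longrightarrow> kel_of_code P = kzero"
  by (induction P) (auto simp: fun_eq_iff kel_of_code_Nil kel_of_code_Cons kzero_def)

lemma keq_by_certificate:
  assumes "list_all (\<lambda>(a, _). a = 0) (knormalize_code (P @ ksmult_code (-1) (Q @ kcert_code C)))"
    and "\<forall>(_, _, r) \<in> set C. krel_in_range m r"
  shows "keq m (kel_of_code P) (kel_of_code Q)"
proof -
  have "kel_of_code (P @ ksmult_code (-1) (Q @ kcert_code C)) = kzero"
    using kel_of_code_zero_coeffs[OF assms(1)] by (simp only: kel_of_code_knormalize_code)
  then have "ksub (kel_of_code P) (kel_of_code Q) = kel_of_code (kcert_code C)"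
    by (simp add: fun_eq_iff kel_of_code_append ksmult_kel_of_code[symmetric] kadd_def ksmult_def
        ksub_def kzero_def algebra_simps)
  then show ?thesis
    using kcert_code_in_kideal[OF assms(2)] by (simp add: keq_def)
qed

section \<open>The five identities\<close>

definition kz3_triple_cert :: "(rat \<times> kmon_code \<times> krel) list" where
  "kz3_triple_cert =
    [(3, ((0, 0, 1), [5, 8, 11]), Rel_p1), (-1, ((1, 0, 0), [5, 8, 9]), Rel_p1),
    (-1, ((0, 1, 0), [5, 8, 10]), Rel_p1), (-1, ((1, 0, 0), [5, 6, 11]), Rel_p1),
    (-1, ((0, 1, 0), [5, 7, 11]), Rel_p1), (-1, ((1, 0, 0), [3, 8, 11]), Rel_p1),
    (-1, ((0, 1, 0), [4, 8, 11]), Rel_p1), (-1, ((0, 0, 1), [3, 6, 11]), Rel_p1),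
    (-1, ((0, 0, 1), [4, 7, 11]), Rel_p1), (-1, ((0, 0, 1), [3, 8, 9]), Rel_p1),
    (-1, ((0, 0, 1), [4, 8, 10]), Rel_p1), (-1, ((0, 0, 1), [5, 6, 9]), Rel_p1),
    (-1, ((0, 0, 1), [5, 7, 10]), Rel_p1), (-3, ((1, 0, 0), [5, 8, 11]), Rel_p1),
    (-3, ((0, 1, 0), [5, 8, 11]), Rel_p1), (1, ((0, 1, 0), [3, 6, 11]), Rel_p1),
    (1, ((1, 0, 0), [4, 7, 11]), Rel_p1), (1, ((0, 1, 0), [3, 8, 9]), Rel_p1),
    (1, ((1, 0, 0), [4, 8, 10]), Rel_p1), (1, ((0, 1, 0), [5, 6, 9]), Rel_p1),
    (1, ((1, 0, 0), [5, 7, 10]), Rel_p1), (1, ((1, 1, 0), [8, 9]), Rel_odd 1),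
    (1, ((1, 1, 0), [8, 10]), Rel_odd 1), (1, ((1, 1, 0), [6, 11]), Rel_odd 1),
    (1, ((1, 1, 0), [7, 11]), Rel_odd 1), (5, ((1, 1, 0), [3, 11]), Rel_odd 2),
    (5, ((1, 1, 0), [4, 11]), Rel_odd 2), (3, ((2, 0, 0), [8, 11]), Rel_odd 1),
    (6, ((1, 1, 0), [8, 11]), Rel_odd 1), (3, ((0, 2, 0), [8, 11]), Rel_odd 1),
    (3, ((1, 1, 0), [3, 6]), Rel_odd 3), (2, ((0, 2, 0), [3, 6]), Rel_odd 3),
    (2, ((2, 0, 0), [4, 7]), Rel_odd 3), (3, ((1, 1, 0), [4, 7]), Rel_odd 3),
    (2, ((1, 1, 0), [3, 9]), Rel_odd 2), (1, ((0, 2, 0), [3, 9]), Rel_odd 2),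
    (1, ((2, 0, 0), [4, 10]), Rel_odd 2), (2, ((1, 1, 0), [4, 10]), Rel_odd 2),
    (-1, ((1, 1, 0), [6, 9]), Rel_odd 1), (-1, ((0, 2, 0), [6, 9]), Rel_odd 1),
    (-1, ((2, 0, 0), [7, 10]), Rel_odd 1), (-1, ((1, 1, 0), [7, 10]), Rel_odd 1),
    (1, ((1, 1, 0), [4, 9]), Rel_odd 2), (1, ((1, 1, 0), [3, 10]), Rel_odd 2),
    (4, ((1, 1, 0), [4, 6]), Rel_odd 3), (4, ((1, 1, 0), [3, 7]), Rel_odd 3),
    (3, ((2, 0, 0), [3, 11]), Rel_odd 2), (3, ((2, 0, 0), [4, 11]), Rel_odd 2),
    (3, ((0, 2, 0), [3, 11]), Rel_odd 2), (3, ((0, 2, 0), [4, 11]), Rel_odd 2),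
    (3, ((2, 0, 0), [3, 6]), Rel_odd 3), (3, ((2, 0, 0), [3, 7]), Rel_odd 3),
    (3, ((2, 0, 0), [4, 6]), Rel_odd 3), (3, ((0, 2, 0), [3, 7]), Rel_odd 3),
    (3, ((0, 2, 0), [4, 6]), Rel_odd 3), (3, ((0, 2, 0), [4, 7]), Rel_odd 3),
    (-3/2, ((0, 0, 0), [3, 6, 10]), Rel_p2), (3/2, ((0, 0, 1), [3, 6, 10]), Rel_p1),
    (-3/2, ((1, 0, 0), [3, 6, 10]), Rel_p1), (-3/2, ((0, 1, 0), [3, 6, 10]), Rel_p1),
    (-3/2, ((0, 0, 0), [3, 7, 9]), Rel_p2), (3/2, ((0, 0, 1), [3, 7, 9]), Rel_p1),
    (-3/2, ((1, 0, 0), [3, 7, 9]), Rel_p1), (-3/2, ((0, 1, 0), [3, 7, 9]), Rel_p1),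
    (-3/2, ((0, 0, 0), [3, 7, 10]), Rel_p2), (3/2, ((0, 0, 1), [3, 7, 10]), Rel_p1),
    (-3/2, ((1, 0, 0), [3, 7, 10]), Rel_p1), (-3/2, ((0, 1, 0), [3, 7, 10]), Rel_p1),
    (-3/2, ((0, 0, 0), [4, 6, 9]), Rel_p2), (3/2, ((0, 0, 1), [4, 6, 9]), Rel_p1),
    (-3/2, ((1, 0, 0), [4, 6, 9]), Rel_p1), (-3/2, ((0, 1, 0), [4, 6, 9]), Rel_p1),
    (-3/2, ((0, 0, 0), [4, 6, 10]), Rel_p2), (3/2, ((0, 0, 1), [4, 6, 10]), Rel_p1),
    (-3/2, ((1, 0, 0), [4, 6, 10]), Rel_p1), (-3/2, ((0, 1, 0), [4, 6, 10]), Rel_p1),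
    (-3/2, ((0, 0, 0), [4, 7, 9]), Rel_p2), (3/2, ((0, 0, 1), [4, 7, 9]), Rel_p1),
    (-3/2, ((1, 0, 0), [4, 7, 9]), Rel_p1), (-3/2, ((0, 1, 0), [4, 7, 9]), Rel_p1)]"

definition kz5_triple_cert :: "(rat \<times> kmon_code \<times> krel) list" where
  "kz5_triple_cert =
    [(3, ((0, 0, 3), [5, 8, 11]), Rel_p1), (-1, ((1, 0, 2), [5, 8, 9]), Rel_p1),
    (-1, ((0, 1, 2), [5, 8, 10]), Rel_p1), (-1, ((1, 0, 2), [5, 6, 11]), Rel_p1),
    (-1, ((0, 1, 2), [5, 7, 11]), Rel_p1), (-1, ((1, 0, 2), [3, 8, 11]), Rel_p1),
    (-1, ((0, 1, 2), [4, 8, 11]), Rel_p1), (-1, ((2, 0, 1), [3, 6, 11]), Rel_p1),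
    (-1, ((0, 2, 1), [4, 7, 11]), Rel_p1), (-1, ((2, 0, 1), [3, 8, 9]), Rel_p1),
    (-1, ((0, 2, 1), [4, 8, 10]), Rel_p1), (-1, ((2, 0, 1), [5, 6, 9]), Rel_p1),
    (-1, ((0, 2, 1), [5, 7, 10]), Rel_p1), (-3, ((1, 0, 2), [5, 8, 11]), Rel_p1),
    (-3, ((0, 1, 2), [5, 8, 11]), Rel_p1), (1, ((1, 1, 1), [5, 8, 9]), Rel_p1),
    (1, ((1, 1, 1), [5, 8, 10]), Rel_p1), (1, ((1, 1, 1), [5, 6, 11]), Rel_p1),
    (1, ((1, 1, 1), [5, 7, 11]), Rel_p1), (1, ((1, 1, 1), [3, 8, 11]), Rel_p1),
    (1, ((1, 1, 1), [4, 8, 11]), Rel_p1), (1, ((2, 1, 0), [3, 6, 11]), Rel_p1),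
    (1, ((1, 2, 0), [4, 7, 11]), Rel_p1), (1, ((2, 1, 0), [3, 8, 9]), Rel_p1),
    (1, ((1, 2, 0), [4, 8, 10]), Rel_p1), (1, ((2, 1, 0), [5, 6, 9]), Rel_p1),
    (1, ((1, 2, 0), [5, 7, 10]), Rel_p1), (3, ((2, 0, 1), [5, 8, 11]), Rel_p1),
    (6, ((1, 1, 1), [5, 8, 11]), Rel_p1), (3, ((0, 2, 1), [5, 8, 11]), Rel_p1),
    (-1, ((2, 1, 0), [5, 8, 9]), Rel_p1), (-1, ((1, 2, 0), [5, 8, 9]), Rel_p1),
    (-1, ((2, 1, 0), [5, 8, 10]), Rel_p1), (-1, ((1, 2, 0), [5, 8, 10]), Rel_p1),
    (-1, ((2, 1, 0), [5, 6, 11]), Rel_p1), (-1, ((1, 2, 0), [5, 6, 11]), Rel_p1),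
    (-1, ((2, 1, 0), [5, 7, 11]), Rel_p1), (-1, ((1, 2, 0), [5, 7, 11]), Rel_p1),
    (-1, ((2, 1, 0), [3, 8, 11]), Rel_p1), (-1, ((1, 2, 0), [3, 8, 11]), Rel_p1),
    (-1, ((2, 1, 0), [4, 8, 11]), Rel_p1), (-1, ((1, 2, 0), [4, 8, 11]), Rel_p1),
    (-3, ((3, 0, 0), [5, 8, 11]), Rel_p1), (-9, ((2, 1, 0), [5, 8, 11]), Rel_p1),
    (-9, ((1, 2, 0), [5, 8, 11]), Rel_p1), (-3, ((0, 3, 0), [5, 8, 11]), Rel_p1),
    (9, ((3, 1, 0), [3, 6]), Rel_odd 3), (13, ((2, 2, 0), [3, 6]), Rel_odd 3),
    (13, ((2, 2, 0), [4, 7]), Rel_odd 3), (9, ((1, 3, 0), [4, 7]), Rel_odd 3),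
    (2, ((3, 1, 0), [3, 9]), Rel_odd 2), (3, ((2, 2, 0), [3, 9]), Rel_odd 2),
    (3, ((2, 2, 0), [4, 10]), Rel_odd 2), (2, ((1, 3, 0), [4, 10]), Rel_odd 2),
    (-1, ((3, 1, 0), [6, 9]), Rel_odd 1), (-1, ((2, 2, 0), [6, 9]), Rel_odd 1),
    (-1, ((2, 2, 0), [7, 10]), Rel_odd 1), (-1, ((1, 3, 0), [7, 10]), Rel_odd 1),
    (1, ((3, 1, 0), [8, 9]), Rel_odd 1), (2, ((2, 2, 0), [8, 9]), Rel_odd 1),
    (1, ((1, 3, 0), [8, 9]), Rel_odd 1), (1, ((3, 1, 0), [8, 10]), Rel_odd 1),
    (2, ((2, 2, 0), [8, 10]), Rel_odd 1), (1, ((1, 3, 0), [8, 10]), Rel_odd 1),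
    (1, ((3, 1, 0), [6, 11]), Rel_odd 1), (2, ((2, 2, 0), [6, 11]), Rel_odd 1),
    (1, ((1, 3, 0), [6, 11]), Rel_odd 1), (1, ((3, 1, 0), [7, 11]), Rel_odd 1),
    (2, ((2, 2, 0), [7, 11]), Rel_odd 1), (1, ((1, 3, 0), [7, 11]), Rel_odd 1),
    (11, ((3, 1, 0), [3, 11]), Rel_odd 2), (16, ((2, 2, 0), [3, 11]), Rel_odd 2),
    (11, ((1, 3, 0), [3, 11]), Rel_odd 2), (11, ((3, 1, 0), [4, 11]), Rel_odd 2),
    (16, ((2, 2, 0), [4, 11]), Rel_odd 2), (11, ((1, 3, 0), [4, 11]), Rel_odd 2),
    (3, ((4, 0, 0), [8, 11]), Rel_odd 1), (12, ((3, 1, 0), [8, 11]), Rel_odd 1),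
    (18, ((2, 2, 0), [8, 11]), Rel_odd 1), (12, ((1, 3, 0), [8, 11]), Rel_odd 1),
    (3, ((0, 4, 0), [8, 11]), Rel_odd 1), (1, ((3, 1, 0), [4, 9]), Rel_odd 2),
    (2, ((2, 2, 0), [4, 9]), Rel_odd 2), (1, ((1, 3, 0), [3, 9]), Rel_odd 2),
    (1, ((1, 3, 0), [4, 9]), Rel_odd 2), (1, ((3, 1, 0), [3, 10]), Rel_odd 2),
    (1, ((3, 1, 0), [4, 10]), Rel_odd 2), (2, ((2, 2, 0), [3, 10]), Rel_odd 2),
    (1, ((1, 3, 0), [3, 10]), Rel_odd 2), (10, ((3, 1, 0), [4, 6]), Rel_odd 3),
    (14, ((2, 2, 0), [4, 6]), Rel_odd 3), (10, ((1, 3, 0), [3, 6]), Rel_odd 3),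
    (10, ((1, 3, 0), [4, 6]), Rel_odd 3), (10, ((3, 1, 0), [3, 7]), Rel_odd 3),
    (10, ((3, 1, 0), [4, 7]), Rel_odd 3), (14, ((2, 2, 0), [3, 7]), Rel_odd 3),
    (10, ((1, 3, 0), [3, 7]), Rel_odd 3), (3, ((4, 0, 0), [3, 11]), Rel_odd 2),
    (3, ((4, 0, 0), [4, 11]), Rel_odd 2), (3, ((0, 4, 0), [3, 11]), Rel_odd 2),
    (3, ((0, 4, 0), [4, 11]), Rel_odd 2), (3, ((4, 0, 0), [3, 6]), Rel_odd 3),
    (3, ((4, 0, 0), [3, 7]), Rel_odd 3), (3, ((4, 0, 0), [4, 6]), Rel_odd 3),
    (3, ((4, 0, 0), [4, 7]), Rel_odd 3), (3, ((0, 4, 0), [3, 6]), Rel_odd 3),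
    (3, ((0, 4, 0), [3, 7]), Rel_odd 3), (3, ((0, 4, 0), [4, 6]), Rel_odd 3),
    (3, ((0, 4, 0), [4, 7]), Rel_odd 3), (-3, ((2, 1, 0), [3, 6, 9]), Rel_p1),
    (-3/2, ((2, 0, 0), [4, 7, 10]), Rel_p2), (3/2, ((2, 0, 1), [4, 7, 10]), Rel_p1),
    (-3/2, ((3, 0, 0), [4, 7, 10]), Rel_p1), (-9/2, ((2, 1, 0), [4, 7, 10]), Rel_p1),
    (-3, ((1, 1, 0), [4, 7, 10]), Rel_p2), (3, ((1, 1, 1), [4, 7, 10]), Rel_p1),
    (-3, ((1, 2, 0), [4, 7, 10]), Rel_p1), (-3/2, ((2, 0, 0), [3, 7, 9]), Rel_p2),
    (3/2, ((2, 0, 1), [3, 7, 9]), Rel_p1), (-3/2, ((3, 0, 0), [3, 7, 9]), Rel_p1),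
    (-9/2, ((2, 1, 0), [3, 7, 9]), Rel_p1), (-3/2, ((2, 0, 0), [4, 6, 9]), Rel_p2),
    (3/2, ((2, 0, 1), [4, 6, 9]), Rel_p1), (-3/2, ((3, 0, 0), [4, 6, 9]), Rel_p1),
    (-9/2, ((2, 1, 0), [4, 6, 9]), Rel_p1), (-3/2, ((2, 0, 0), [4, 7, 9]), Rel_p2),
    (3/2, ((2, 0, 1), [4, 7, 9]), Rel_p1), (-3/2, ((3, 0, 0), [4, 7, 9]), Rel_p1),
    (-9/2, ((2, 1, 0), [4, 7, 9]), Rel_p1), (-3, ((1, 1, 0), [3, 6, 9]), Rel_p2),
    (3, ((1, 1, 1), [3, 6, 9]), Rel_p1), (-9/2, ((1, 2, 0), [3, 6, 9]), Rel_p1),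
    (-3, ((1, 1, 0), [3, 7, 9]), Rel_p2), (3, ((1, 1, 1), [3, 7, 9]), Rel_p1),
    (-9/2, ((1, 2, 0), [3, 7, 9]), Rel_p1), (-3, ((1, 1, 0), [4, 6, 9]), Rel_p2),
    (3, ((1, 1, 1), [4, 6, 9]), Rel_p1), (-9/2, ((1, 2, 0), [4, 6, 9]), Rel_p1),
    (-3, ((1, 1, 0), [4, 7, 9]), Rel_p2), (3, ((1, 1, 1), [4, 7, 9]), Rel_p1),
    (-9/2, ((1, 2, 0), [4, 7, 9]), Rel_p1), (-3/2, ((2, 0, 0), [3, 6, 10]), Rel_p2),
    (3/2, ((2, 0, 1), [3, 6, 10]), Rel_p1), (-3/2, ((3, 0, 0), [3, 6, 10]), Rel_p1),
    (-9/2, ((2, 1, 0), [3, 6, 10]), Rel_p1), (-3/2, ((2, 0, 0), [3, 7, 10]), Rel_p2),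
    (3/2, ((2, 0, 1), [3, 7, 10]), Rel_p1), (-3/2, ((3, 0, 0), [3, 7, 10]), Rel_p1),
    (-9/2, ((2, 1, 0), [3, 7, 10]), Rel_p1), (-3/2, ((2, 0, 0), [4, 6, 10]), Rel_p2),
    (3/2, ((2, 0, 1), [4, 6, 10]), Rel_p1), (-3/2, ((3, 0, 0), [4, 6, 10]), Rel_p1),
    (-9/2, ((2, 1, 0), [4, 6, 10]), Rel_p1), (-3, ((1, 1, 0), [3, 6, 10]), Rel_p2),
    (3, ((1, 1, 1), [3, 6, 10]), Rel_p1), (-9/2, ((1, 2, 0), [3, 6, 10]), Rel_p1),
    (-3, ((1, 1, 0), [3, 7, 10]), Rel_p2), (3, ((1, 1, 1), [3, 7, 10]), Rel_p1),
    (-9/2, ((1, 2, 0), [3, 7, 10]), Rel_p1), (-3, ((1, 1, 0), [4, 6, 10]), Rel_p2),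
    (3, ((1, 1, 1), [4, 6, 10]), Rel_p1), (-9/2, ((1, 2, 0), [4, 6, 10]), Rel_p1),
    (-3/2, ((0, 2, 0), [3, 6, 9]), Rel_p2), (3/2, ((0, 2, 1), [3, 6, 9]), Rel_p1),
    (-3/2, ((0, 3, 0), [3, 6, 9]), Rel_p1), (-3/2, ((0, 2, 0), [3, 6, 10]), Rel_p2),
    (3/2, ((0, 2, 1), [3, 6, 10]), Rel_p1), (-3/2, ((0, 3, 0), [3, 6, 10]), Rel_p1),
    (-3/2, ((0, 2, 0), [3, 7, 9]), Rel_p2), (3/2, ((0, 2, 1), [3, 7, 9]), Rel_p1),
    (-3/2, ((0, 3, 0), [3, 7, 9]), Rel_p1), (-3/2, ((0, 2, 0), [3, 7, 10]), Rel_p2),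
    (3/2, ((0, 2, 1), [3, 7, 10]), Rel_p1), (-3/2, ((0, 3, 0), [3, 7, 10]), Rel_p1),
    (-3/2, ((0, 2, 0), [4, 6, 9]), Rel_p2), (3/2, ((0, 2, 1), [4, 6, 9]), Rel_p1),
    (-3/2, ((0, 3, 0), [4, 6, 9]), Rel_p1), (-3/2, ((0, 2, 0), [4, 6, 10]), Rel_p2),
    (3/2, ((0, 2, 1), [4, 6, 10]), Rel_p1), (-3/2, ((0, 3, 0), [4, 6, 10]), Rel_p1),
    (-3/2, ((0, 2, 0), [4, 7, 9]), Rel_p2), (3/2, ((0, 2, 1), [4, 7, 9]), Rel_p1),
    (-3/2, ((0, 3, 0), [4, 7, 9]), Rel_p1)]"

definition kz4_pair_cert :: "(rat \<times> kmon_code \<times> krel) list" where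
  "kz4_pair_cert =
    [(1, ((0, 0, 2), [5, 8]), Rel_p1), (-1, ((1, 0, 1), [5, 6]), Rel_p1),
    (-1, ((0, 1, 1), [5, 7]), Rel_p1), (-1, ((1, 0, 1), [3, 8]), Rel_p1),
    (-1, ((0, 1, 1), [4, 8]), Rel_p1), (-1, ((1, 0, 1), [5, 8]), Rel_p1),
    (-1, ((0, 1, 1), [5, 8]), Rel_p1), (1, ((1, 1, 0), [5, 6]), Rel_p1),
    (1, ((1, 1, 0), [5, 7]), Rel_p1), (1, ((1, 1, 0), [3, 8]), Rel_p1),
    (1, ((1, 1, 0), [4, 8]), Rel_p1), (1, ((2, 0, 0), [5, 8]), Rel_p1),
    (2, ((1, 1, 0), [5, 8]), Rel_p1), (1, ((0, 2, 0), [5, 8]), Rel_p1),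
    (1, ((2, 1, 0), [6]), Rel_odd 1), (1, ((1, 2, 0), [6]), Rel_odd 1),
    (1, ((2, 1, 0), [7]), Rel_odd 1), (1, ((1, 2, 0), [7]), Rel_odd 1),
    (2, ((2, 1, 0), [3]), Rel_odd 2), (2, ((1, 2, 0), [3]), Rel_odd 2),
    (2, ((2, 1, 0), [4]), Rel_odd 2), (2, ((1, 2, 0), [4]), Rel_odd 2),
    (1, ((3, 0, 0), [8]), Rel_odd 1), (3, ((2, 1, 0), [8]), Rel_odd 1),
    (3, ((1, 2, 0), [8]), Rel_odd 1), (1, ((0, 3, 0), [8]), Rel_odd 1),
    (1, ((3, 0, 0), [3]), Rel_odd 2), (1, ((3, 0, 0), [4]), Rel_odd 2),
    (1, ((0, 3, 0), [3]), Rel_odd 2), (1, ((0, 3, 0), [4]), Rel_odd 2),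
    (-1/2, ((1, 1, 0), [3, 6]), Rel_p1), (-1/2, ((1, 0, 0), [4, 7]), Rel_p2),
    (1/2, ((1, 0, 1), [4, 7]), Rel_p1), (-1/2, ((2, 0, 0), [4, 7]), Rel_p1),
    (-1/2, ((1, 1, 0), [4, 7]), Rel_p1), (-1/2, ((1, 0, 0), [3, 7]), Rel_p2),
    (1/2, ((1, 0, 1), [3, 7]), Rel_p1), (-1/2, ((2, 0, 0), [3, 7]), Rel_p1),
    (-1, ((1, 1, 0), [3, 7]), Rel_p1), (-1/2, ((1, 0, 0), [4, 6]), Rel_p2),
    (1/2, ((1, 0, 1), [4, 6]), Rel_p1), (-1/2, ((2, 0, 0), [4, 6]), Rel_p1),
    (-1, ((1, 1, 0), [4, 6]), Rel_p1), (-1/2, ((0, 1, 0), [3, 6]), Rel_p2),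
    (1/2, ((0, 1, 1), [3, 6]), Rel_p1), (-1/2, ((0, 2, 0), [3, 6]), Rel_p1),
    (-1/2, ((0, 1, 0), [3, 7]), Rel_p2), (1/2, ((0, 1, 1), [3, 7]), Rel_p1),
    (-1/2, ((0, 2, 0), [3, 7]), Rel_p1), (-1/2, ((0, 1, 0), [4, 6]), Rel_p2),
    (1/2, ((0, 1, 1), [4, 6]), Rel_p1), (-1/2, ((0, 2, 0), [4, 6]), Rel_p1)]"

definition kz6_pair_cert :: "(rat \<times> kmon_code \<times> krel) list" where
  "kz6_pair_cert =
    [(1, ((0, 0, 4), [5, 8]), Rel_p1), (-1, ((1, 0, 3), [5, 6]), Rel_p1),
    (-1, ((0, 1, 3), [5, 7]), Rel_p1), (-1, ((3, 0, 1), [3, 8]), Rel_p1),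
    (-1, ((0, 3, 1), [4, 8]), Rel_p1), (-1, ((1, 0, 3), [5, 8]), Rel_p1),
    (-1, ((0, 1, 3), [5, 8]), Rel_p1), (1, ((1, 1, 2), [5, 6]), Rel_p1),
    (1, ((1, 1, 2), [5, 7]), Rel_p1), (1, ((3, 1, 0), [3, 8]), Rel_p1),
    (1, ((1, 3, 0), [4, 8]), Rel_p1), (1, ((2, 0, 2), [5, 8]), Rel_p1),
    (2, ((1, 1, 2), [5, 8]), Rel_p1), (1, ((0, 2, 2), [5, 8]), Rel_p1),
    (-1, ((2, 1, 1), [5, 6]), Rel_p1), (-1, ((1, 2, 1), [5, 6]), Rel_p1),
    (-1, ((2, 1, 1), [5, 7]), Rel_p1), (-1, ((1, 2, 1), [5, 7]), Rel_p1),
    (-1, ((3, 0, 1), [5, 8]), Rel_p1), (-3, ((2, 1, 1), [5, 8]), Rel_p1),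
    (-3, ((1, 2, 1), [5, 8]), Rel_p1), (-1, ((0, 3, 1), [5, 8]), Rel_p1),
    (1, ((3, 1, 0), [5, 6]), Rel_p1), (2, ((2, 2, 0), [5, 6]), Rel_p1),
    (1, ((1, 3, 0), [5, 6]), Rel_p1), (1, ((3, 1, 0), [5, 7]), Rel_p1),
    (2, ((2, 2, 0), [5, 7]), Rel_p1), (1, ((1, 3, 0), [5, 7]), Rel_p1),
    (1, ((4, 0, 0), [5, 8]), Rel_p1), (4, ((3, 1, 0), [5, 8]), Rel_p1),
    (6, ((2, 2, 0), [5, 8]), Rel_p1), (4, ((1, 3, 0), [5, 8]), Rel_p1),
    (1, ((0, 4, 0), [5, 8]), Rel_p1), (4, ((4, 1, 0), [3]), Rel_odd 2),
    (9, ((3, 2, 0), [3]), Rel_odd 2), (9, ((2, 3, 0), [4]), Rel_odd 2),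
    (4, ((1, 4, 0), [4]), Rel_odd 2), (1, ((4, 1, 0), [6]), Rel_odd 1),
    (3, ((3, 2, 0), [6]), Rel_odd 1), (3, ((2, 3, 0), [6]), Rel_odd 1),
    (1, ((1, 4, 0), [6]), Rel_odd 1), (1, ((4, 1, 0), [7]), Rel_odd 1),
    (3, ((3, 2, 0), [7]), Rel_odd 1), (3, ((2, 3, 0), [7]), Rel_odd 1),
    (1, ((1, 4, 0), [7]), Rel_odd 1), (1, ((5, 0, 0), [8]), Rel_odd 1),
    (5, ((4, 1, 0), [8]), Rel_odd 1), (10, ((3, 2, 0), [8]), Rel_odd 1),
    (10, ((2, 3, 0), [8]), Rel_odd 1), (5, ((1, 4, 0), [8]), Rel_odd 1),
    (1, ((0, 5, 0), [8]), Rel_odd 1), (1, ((5, 0, 0), [3]), Rel_odd 2),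
    (1, ((5, 0, 0), [4]), Rel_odd 2), (5, ((4, 1, 0), [4]), Rel_odd 2),
    (10, ((3, 2, 0), [4]), Rel_odd 2), (10, ((2, 3, 0), [3]), Rel_odd 2),
    (5, ((1, 4, 0), [3]), Rel_odd 2), (1, ((0, 5, 0), [3]), Rel_odd 2),
    (1, ((0, 5, 0), [4]), Rel_odd 2), (-3/2, ((3, 1, 0), [3, 6]), Rel_p1),
    (-3/2, ((2, 1, 0), [4, 7]), Rel_p2), (3/2, ((2, 1, 1), [4, 7]), Rel_p1),
    (-2, ((3, 1, 0), [4, 7]), Rel_p1), (-3, ((2, 2, 0), [4, 7]), Rel_p1),
    (-3/2, ((1, 2, 0), [4, 7]), Rel_p2), (3/2, ((1, 2, 1), [4, 7]), Rel_p1),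
    (-3/2, ((1, 3, 0), [4, 7]), Rel_p1), (-1/2, ((3, 0, 0), [4, 6]), Rel_p2),
    (1/2, ((3, 0, 1), [4, 6]), Rel_p1), (-1/2, ((4, 0, 0), [4, 6]), Rel_p1),
    (-2, ((3, 1, 0), [4, 6]), Rel_p1), (-3/2, ((2, 1, 0), [3, 6]), Rel_p2),
    (3/2, ((2, 1, 1), [3, 6]), Rel_p1), (-3, ((2, 2, 0), [3, 6]), Rel_p1),
    (-3/2, ((2, 1, 0), [4, 6]), Rel_p2), (3/2, ((2, 1, 1), [4, 6]), Rel_p1),
    (-3, ((2, 2, 0), [4, 6]), Rel_p1), (-3/2, ((1, 2, 0), [3, 6]), Rel_p2),
    (3/2, ((1, 2, 1), [3, 6]), Rel_p1), (-2, ((1, 3, 0), [3, 6]), Rel_p1),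
    (-3/2, ((1, 2, 0), [4, 6]), Rel_p2), (3/2, ((1, 2, 1), [4, 6]), Rel_p1),
    (-2, ((1, 3, 0), [4, 6]), Rel_p1), (-1/2, ((3, 0, 0), [3, 7]), Rel_p2),
    (1/2, ((3, 0, 1), [3, 7]), Rel_p1), (-1/2, ((4, 0, 0), [3, 7]), Rel_p1),
    (-2, ((3, 1, 0), [3, 7]), Rel_p1), (-1/2, ((3, 0, 0), [4, 7]), Rel_p2),
    (1/2, ((3, 0, 1), [4, 7]), Rel_p1), (-1/2, ((4, 0, 0), [4, 7]), Rel_p1),
    (-3/2, ((2, 1, 0), [3, 7]), Rel_p2), (3/2, ((2, 1, 1), [3, 7]), Rel_p1),
    (-3, ((2, 2, 0), [3, 7]), Rel_p1), (-3/2, ((1, 2, 0), [3, 7]), Rel_p2),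
    (3/2, ((1, 2, 1), [3, 7]), Rel_p1), (-2, ((1, 3, 0), [3, 7]), Rel_p1),
    (-1/2, ((0, 3, 0), [3, 6]), Rel_p2), (1/2, ((0, 3, 1), [3, 6]), Rel_p1),
    (-1/2, ((0, 4, 0), [3, 6]), Rel_p1), (-1/2, ((0, 3, 0), [3, 7]), Rel_p2),
    (1/2, ((0, 3, 1), [3, 7]), Rel_p1), (-1/2, ((0, 4, 0), [3, 7]), Rel_p1),
    (-1/2, ((0, 3, 0), [4, 6]), Rel_p2), (1/2, ((0, 3, 1), [4, 6]), Rel_p1),
    (-1/2, ((0, 4, 0), [4, 6]), Rel_p1)]"

definition kz6_empty_cert :: "(rat \<times> kmon_code \<times> krel) list" where
  "kz6_empty_cert =
    [(1, ((0, 0, 4), []), Rel_p1), (-1, ((1, 0, 3), []), Rel_p1),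
    (-1, ((0, 1, 3), []), Rel_p1), (1, ((2, 0, 2), []), Rel_p1),
    (2, ((1, 1, 2), []), Rel_p1), (1, ((0, 2, 2), []), Rel_p1),
    (-1, ((3, 0, 1), []), Rel_p1), (-1/2, ((2, 1, 1), []), Rel_p1),
    (-1/2, ((1, 2, 1), []), Rel_p1), (-1, ((0, 3, 1), []), Rel_p1),
    (1, ((4, 0, 0), []), Rel_p1), (3/2, ((3, 1, 0), []), Rel_p1),
    (1, ((2, 2, 0), []), Rel_p1), (3/2, ((1, 3, 0), []), Rel_p1),
    (1, ((0, 4, 0), []), Rel_p1), (-5/2, ((2, 1, 0), []), Rel_p2),
    (-5/2, ((1, 2, 0), []), Rel_p2)]"

lemma kz3_triple_expansion:
  assumes "3 \<le> m"
  shows "keq m (ksmult 9 (kz 3 {1,2,3}))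
       (kadd (kadd (kadd (kadd (ksub
          (kmult (kz 2 {1,2}) (kz 2 {3}))
          (kmult (kz 2 {1,3}) (kz 2 {2})))
          (kmult (kz 2 {2,3}) (kz 2 {1})))
          (kmult (kz 1 {1,2}) (kz 3 {3})))
          (ksmult (-1) (kmult (kz 1 {1,3}) (kz 3 {2}))))
          (kmult (kz 1 {2,3}) (kz 3 {1})))"
  by (simp only: kel_of_code_reflect, rule keq_by_certificate[where C = kz3_triple_cert])
    (code_simp, use assms in \<open>simp add: kz3_triple_cert_def\<close>)

lemma kz5_triple_expansion:
  assumes "3 \<le> m"
  shows "keq m (ksmult 9 (kz 5 {1,2,3}))
       (kadd (kadd (kadd (kadd (ksub
          (kmult (kz 4 {1,2}) (kz 2 {3}))
          (kmult (kz 4 {1,3}) (kz 2 {2})))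
          (kmult (kz 4 {2,3}) (kz 2 {1})))
          (kmult (kz 3 {1,2}) (kz 3 {3})))
          (ksmult (-1) (kmult (kz 3 {1,3}) (kz 3 {2}))))
          (kmult (kz 3 {2,3}) (kz 3 {1})))"
  by (simp only: kel_of_code_reflect, rule keq_by_certificate[where C = kz5_triple_cert])
    (code_simp, use assms in \<open>simp add: kz5_triple_cert_def\<close>)

lemma kz4_pair_expansion:
  assumes "3 \<le> m"
  shows "keq m (ksmult 3 (kz 4 {1,2}))
       (kadd (kmult (kz 3 {1}) (kz 2 {2})) (kmult (kz 2 {1}) (kz 3 {2})))"
  by (simp only: kel_of_code_reflect, rule keq_by_certificate[where C = kz4_pair_cert])
    (code_simp, use assms in \<open>simp add: kz4_pair_cert_def\<close>)

lemma kz6_pair_expansion: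
  assumes "3 \<le> m"
  shows "keq m (ksmult 3 (kz 6 {1,2}))
       (kadd (kmult (kz 5 {1}) (kz 2 {2})) (kmult (kz 4 {1}) (kz 3 {2})))"
  by (simp only: kel_of_code_reflect, rule keq_by_certificate[where C = kz6_pair_cert])
    (code_simp, use assms in \<open>simp add: kz6_pair_cert_def\<close>)

lemma kz6_empty_vanishes:
  assumes "3 \<le> m"
  shows "keq m (kz 6 {}) kzero"
  by (simp only: kel_of_code_reflect, rule keq_by_certificate[where C = kz6_empty_cert])
    (code_simp, use assms in \<open>simp add: kz6_empty_cert_def\<close>)

theorem lemma6p3:
  fixes m :: nat
  assumes "m \<ge> 3"
  shows
  "keq m (ksmult 9 (kz 3 {1,2,3}))
     (kadd (kadd (kadd (kadd (ksub
        (kmult (kz 2 {1,2}) (kz 2 {3}))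
        (kmult (kz 2 {1,3}) (kz 2 {2})))
        (kmult (kz 2 {2,3}) (kz 2 {1})))
        (kmult (kz 1 {1,2}) (kz 3 {3})))
        (ksmult (-1) (kmult (kz 1 {1,3}) (kz 3 {2}))))
        (kmult (kz 1 {2,3}) (kz 3 {1})))
   \<and> keq m (ksmult 9 (kz 5 {1,2,3}))
     (kadd (kadd (kadd (kadd (ksub
        (kmult (kz 4 {1,2}) (kz 2 {3}))
        (kmult (kz 4 {1,3}) (kz 2 {2})))
        (kmult (kz 4 {2,3}) (kz 2 {1})))
        (kmult (kz 3 {1,2}) (kz 3 {3})))
        (ksmult (-1) (kmult (kz 3 {1,3}) (kz 3 {2}))))
        (kmult (kz 3 {2,3}) (kz 3 {1})))
   \<and> keq m (ksmult 3 (kz 4 {1,2}))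
     (kadd (kmult (kz 3 {1}) (kz 2 {2})) (kmult (kz 2 {1}) (kz 3 {2})))
   \<and> keq m (ksmult 3 (kz 6 {1,2}))
     (kadd (kmult (kz 5 {1}) (kz 2 {2})) (kmult (kz 4 {1}) (kz 3 {2})))
   \<and> keq m (kz 6 {}) kzero"
  using kz3_triple_expansion kz5_triple_expansion kz4_pair_expansion kz6_pair_expansion
    kz6_empty_vanishes assms
  by blast

end
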